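(* Let $n\ge 2$ be a power of $2$ and let $\mathcal{T}$ be a standard single-elimination tournament with $n$ players. Then for every scoring system $\sigma$ of $\mathcal{T}$ we have $\dim(\mathcal{T},\sigma)=n/2$. Moreover, for every such $n$ there exists a set of $n/2$ brackets of $\mathcal{T}$ which is $\sigma$-resolving for every scoring system $\sigma$.
   Context: A single-elimination tournament is a finite directed graph $\mathcal{T}$ such that: (a) $\mathcal{T}$ has exactly one sink (vertex with no out-neighbours); (b) every non-sink vertex has exactly one out-neighbour; (c) $\mathcal{T}$ has no directed cycles; (d) $|N^-(v)|\ne 1$ for every vertex $v$, where $N^-(v)$ denotes the set of in-neighbours of $v$. The players $P(\mathcal{T})$ are the sources (vertices with no in-neighbours) and the matches are $M(\mathcal{T})=V(\mathcal{T})\setminus P(\mathcal{T})$. $\mathcal{T}$ is standard if it is obtained from a complete binary tree by orienting all edges towards its center (root). A bracket is a function $B:V(\mathcal{T})\to P(\mathcal{T})$ with $B(a)=a$ for every player $a$ and $B(x)\in\{B(u):u\in N^-(x)\}$ for every match $x$. A scoring system is any function $\sigma:M(\mathcal{T})\to\mathbb{R}_{>0}$. For brackets $B,B'$ let $\mathrm{score}_\sigma(B,B')=\sum_{x\in M(\mathcal{T}):\,B(x)=B'(x)}\sigma(x)$. A set of brackets $\mathcal{B}$ is $\sigma$-resolving if for every pair of distinct brackets $B\ne B'$ there is $B_i\in\mathcal{B}$ with $\mathrm{score}_\sigma(B_i,B)\ne\mathrm{score}_\sigma(B_i,B')$. $\dim(\mathcal{T},\sigma)$ denotes the minimum size of a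 $\sigma$-resolving set. *)

theory Defs
  imports Complex_Main
begin

definition in_nbrs :: "('a \<times> 'a) set \<Rightarrow> 'a \<Rightarrow> 'a set" where
  "in_nbrs E v = {u. (u, v) \<in> E}"

definition players :: "'a set \<Rightarrow> ('a \<times> 'a) set \<Rightarrow> 'a set" where
  "players V E = {v \<in> V. in_nbrs E v = {}}"

definition matches :: "'a set \<Rightarrow> ('a \<times> 'a) set \<Rightarrow> 'a set" where
  "matches V E = V - players V E"

text \<open>Complete binary tree of depth k: nodes are boolean words of length at most k,
  the root is the empty word; every edge is oriented from a child (xs @ [b]) to its
  parent xs, i.e. towards the root.\<close>

definition cbt_nodes :: "nat \<Rightarrow> bool list set" where
  "cbt_nodes k = {xs. length xs \<le> k}"

definition cbt_edges :: "(bool list \<times> bool list) set" where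
  "cbt_edges = {(xs @ [b], xs) | xs b. True}"

definition standard_tournament :: "'a set \<Rightarrow> ('a \<times> 'a) set \<Rightarrow> bool" where
  "standard_tournament V E \<longleftrightarrow> E \<subseteq> V \<times> V \<and>
     (\<exists>k f. bij_betw f V (cbt_nodes k) \<and>
        (\<forall>u\<in>V. \<forall>v\<in>V. (u, v) \<in> E \<longleftrightarrow> (f u, f v) \<in> cbt_edges))"

text \<open>Brackets are functions V \<rightarrow> players, taken extensionally (undefined outside V).\<close>

definition brackets :: "'a set \<Rightarrow> ('a \<times> 'a) set \<Rightarrow> ('a \<Rightarrow> 'a) set" where
  "brackets V E = {B. (\<forall>v. v \<notin> V \<longrightarrow> B v = undefined)
      \<and> (\<forall>v\<in>V. B v \<in> players V E)
      \<and> (\<forall>a\<in>players V E. B a = a)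
      \<and> (\<forall>x\<in>matches V E. B x \<in> B ` in_nbrs E x)}"

definition scoring_system :: "'a set \<Rightarrow> ('a \<times> 'a) set \<Rightarrow> ('a \<Rightarrow> real) \<Rightarrow> bool" where
  "scoring_system V E \<sigma> \<longleftrightarrow> (\<forall>x\<in>matches V E. \<sigma> x > 0)"

definition score :: "'a set \<Rightarrow> ('a \<times> 'a) set \<Rightarrow> ('a \<Rightarrow> real) \<Rightarrow> ('a \<Rightarrow> 'a) \<Rightarrow> ('a \<Rightarrow> 'a) \<Rightarrow> real" where
  "score V E \<sigma> B B' = (\<Sum>x\<in>{x \<in> matches V E. B x = B' x}. \<sigma> x)"

definition resolving :: "'a set \<Rightarrow> ('a \<times> 'a) set \<Rightarrow> ('a \<Rightarrow> real) \<Rightarrow> ('a \<Rightarrow> 'a) set \<Rightarrow> bool" where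
  "resolving V E \<sigma> S \<longleftrightarrow> S \<subseteq> brackets V E \<and>
     (\<forall>B\<in>brackets V E. \<forall>B'\<in>brackets V E. B \<noteq> B' \<longrightarrow>
        (\<exists>Bi\<in>S. score V E \<sigma> Bi B \<noteq> score V E \<sigma> Bi B'))"

definition tdim :: "'a set \<Rightarrow> ('a \<times> 'a) set \<Rightarrow> ('a \<Rightarrow> real) \<Rightarrow> nat" where
  "tdim V E \<sigma> = (LEAST m. \<exists>S. finite S \<and> card S = m \<and> resolving V E \<sigma> S)"

end

theory Submission
  imports Defs "HOL-Library.Sublist"
begin

text \<open>
  Two brackets that differ only in the champion can be told apart by a
  test bracket only if its own champion is one of the two.  Letting the two champions
  range over the left and the right half of the draw, the champions of a resolving set
  must cover one of the halves, so the set has at least n/2 elements.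

  Let the tree have depth K, so n = 2^K.  Call its rightmost path the
  spine; the subtree hanging off the spine to the left at depth i has 2^(K-1-i) leaves.
  A binary word w of length K - 1 determines a test bracket: in the i-th hanging
  subtree the leaf coded by the first K-1-i letters of w wins all its matches,
  including the spine match at depth i, and every other match goes to the leftmost
  player below it.  Suppose two brackets score equally against every test on the
  matches below the spine node at depth j.  Flipping one suitable letter of w changes
  the test below that node only along a single path ending in a given leaf pair, and
  on such a path the matches won by a fixed leaf form a segment containing its last
  match; as the weights are positive, equal score differences force equal segments.
  Hence the two brackets agree on the hanging subtree at depth j and at the spine node
  whenever its winner comes from there, so they score equally below the spine node at
  depth j + 1.  Walking down the spine and then back up, the brackets agree everywhere.
\<close>

lemma resolving_cong:
  assumes "\<And>x. x \<in> matches V E \<Longrightarrow> \<sigma> x = \<sigma>' x"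
  shows "resolving V E \<sigma> S \<longleftrightarrow> resolving V E \<sigma>' S"
proof -
  have "score V E \<sigma> X B = score V E \<sigma>' X B" for X B
    unfolding score_def using assms by (intro sum.cong) auto
  then show ?thesis
    unfolding resolving_def by simp
qed

lemma tdim_eqI:
  assumes "finite S" "card S = m" "resolving V E \<sigma> S"
    and "\<And>T. finite T \<Longrightarrow> resolving V E \<sigma> T \<Longrightarrow> m \<le> card T"
  shows "tdim V E \<sigma> = m"
  unfolding tdim_def by (rule Least_equality) (use assms in auto)

lemma score_neq_imp_agree_at:
  assumes "score V E \<sigma> X B \<noteq> score V E \<sigma> X C" and "\<forall>x. x \<noteq> x\<^sub>0 \<longrightarrow> B x = C x"
  shows "X x\<^sub>0 = B x\<^sub>0 \<or> X x\<^sub>0 = C x\<^sub>0"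
proof (rule ccontr)
  assume "\<not> ?thesis"
  then have "X x = B x \<longleftrightarrow> X x = C x" for x
    using assms(2) by (cases "x = x\<^sub>0") auto
  then have "score V E \<sigma> X B = score V E \<sigma> X C"
    unfolding score_def by presburger
  with assms(1) show False ..
qed

lemma nested_eq_if_sum_eq:
  fixes \<sigma> :: "'a \<Rightarrow> real"
  assumes "finite A" "finite B" "A \<subseteq> B \<or> B \<subseteq> A"
    and "\<And>x. x \<in> A \<union> B \<Longrightarrow> 0 < \<sigma> x" and "sum \<sigma> A = sum \<sigma> B"
  shows "A = B"
proof (rule ccontr)
  assume "A \<noteq> B"
  with assms(3) obtain X Y where XY: "X \<subset> Y" "{X, Y} = {A, B}"
    by blast
  then have "finite Y" "0 < sum \<sigma> (Y - X)"
    using assms(1,2,4) by (auto intro!: sum_pos)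
  with XY have "sum \<sigma> X < sum \<sigma> Y"
    using sum.subset_diff[of X Y \<sigma>] by auto
  with XY assms(5) show False
    by (auto simp: doubleton_eq_iff)
qed

definition partial_score :: "('v \<Rightarrow> real) \<Rightarrow> 'v set \<Rightarrow> ('v \<Rightarrow> 'p) \<Rightarrow> ('v \<Rightarrow> 'p) \<Rightarrow> real" where
  "partial_score \<sigma> U X Y = (\<Sum>x\<in>U. if X x = Y x then \<sigma> x else 0)"

lemma score_eq_partial_score:
  "finite (matches V E) \<Longrightarrow> score V E \<sigma> X Y = partial_score \<sigma> (matches V E) X Y"
  unfolding score_def partial_score_def by (rule sum.inter_filter)

lemma partial_score_const:
  assumes "finite U" and "\<And>x. x \<in> U \<Longrightarrow> X x = p"
  shows "partial_score \<sigma> U X Y = sum \<sigma> {x \<in> U. Y x = p}"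
  unfolding partial_score_def using assms by (simp add: sum.inter_filter eq_commute)

lemma partial_score_restrict_diff:
  assumes "finite U" "A \<subseteq> U" and "\<And>x. x \<in> U - A \<Longrightarrow> X\<^sub>1 x = X\<^sub>2 x"
  shows "partial_score \<sigma> U X\<^sub>1 Y - partial_score \<sigma> U X\<^sub>2 Y = partial_score \<sigma> A X\<^sub>1 Y - partial_score \<sigma> A X\<^sub>2 Y"
proof -
  have "partial_score \<sigma> U X Y = partial_score \<sigma> (U - A) X Y + partial_score \<sigma> A X Y" for X
    unfolding partial_score_def using assms(2,1) by (rule sum.subset_diff)
  moreover have "partial_score \<sigma> (U - A) X\<^sub>1 Y = partial_score \<sigma> (U - A) X\<^sub>2 Y"
    unfolding partial_score_def using assms(3) by (intro sum.cong) auto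
  ultimately show ?thesis
    by simp
qed

section \<open>Transport along isomorphisms\<close>

definition bracket_map :: "'b set \<Rightarrow> ('a \<Rightarrow> 'b) \<Rightarrow> ('b \<Rightarrow> 'a) \<Rightarrow> ('a \<Rightarrow> 'a) \<Rightarrow> 'b \<Rightarrow> 'b" where
  "bracket_map V' f g B = (\<lambda>v. if v \<in> V' then f (B (g v)) else undefined)"

locale tournament_iso =
  fixes V :: "'a set" and E :: "('a \<times> 'a) set" and V' :: "'b set" and E' :: "('b \<times> 'b) set"
    and f :: "'a \<Rightarrow> 'b" and g :: "'b \<Rightarrow> 'a"
  assumes f_into: "\<And>v. v \<in> V \<Longrightarrow> f v \<in> V'" and g_f: "\<And>v. v \<in> V \<Longrightarrow> g (f v) = v"
    and g_into: "\<And>v. v \<in> V' \<Longrightarrow> g v \<in> V" and f_g: "\<And>v. v \<in> V' \<Longrightarrow> f (g v) = v"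
    and edges_subset: "E \<subseteq> V \<times> V" and edges_subset': "E' \<subseteq> V' \<times> V'"
    and edge_iff: "\<And>u v. u \<in> V \<Longrightarrow> v \<in> V \<Longrightarrow> (u, v) \<in> E \<longleftrightarrow> (f u, f v) \<in> E'"
begin

lemma inverse: "tournament_iso V' E' V E g f"
proof
  fix u v assume "u \<in> V'" "v \<in> V'"
  then show "(u, v) \<in> E' \<longleftrightarrow> (g u, g v) \<in> E"
    using edge_iff[of "g u" "g v"] by (simp add: g_into f_g)
qed (use f_into g_f g_into f_g edges_subset edges_subset' in auto)

lemma inj_on_f: "inj_on f V"
  using g_f by (rule inj_on_inverseI)

lemma in_nbrs_f: "v \<in> V \<Longrightarrow> in_nbrs E' (f v) = f ` in_nbrs E v"
  unfolding in_nbrs_def using edges_subset edges_subset' edge_iff f_g g_into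
  by (auto simp: image_iff) (metis mem_Sigma_iff subsetD)

lemma players_iff: "v \<in> V \<Longrightarrow> f v \<in> players V' E' \<longleftrightarrow> v \<in> players V E"
  unfolding players_def using in_nbrs_f f_into by auto

lemma matches_iff: "v \<in> V \<Longrightarrow> f v \<in> matches V' E' \<longleftrightarrow> v \<in> matches V E"
  unfolding matches_def using players_iff f_into by auto

lemma players_image: "players V' E' = f ` players V E"
proof (intro set_eqI iffI)
  fix x assume x: "x \<in> players V' E'"
  then have "x \<in> V'" by (simp add: players_def)
  with x show "x \<in> f ` players V E"
    using players_iff[of "g x"] by (metis g_into f_g image_eqI)
qed (use players_iff in \<open>auto simp: players_def\<close>)

lemma card_players: "card (players V' E') = card (players V E)"
  unfolding players_image
  by (rule card_image, rule inj_on_subset[OF inj_on_f]) (auto simp: players_def)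

lemma scoring_system_comp:
  "scoring_system V E \<sigma> \<Longrightarrow> scoring_system V' E' (\<lambda>x. \<sigma> (g x))"
  unfolding scoring_system_def using matches_iff g_into f_g
  by (metis Diff_iff matches_def)

lemma bracket_map_bracket:
  assumes B: "B \<in> brackets V E"
  shows "bracket_map V' f g B \<in> brackets V' E'"
proof -
  have B_player: "B v \<in> players V E" and B_in: "B v \<in> V" if "v \<in> V" for v
    using B that unfolding brackets_def players_def by auto
  have B_match: "\<exists>u\<in>in_nbrs E x. B x = B u" if "x \<in> matches V E" for x
    using B that unfolding brackets_def by auto
  show ?thesis
    unfolding brackets_def
  proof (intro CollectI conjI allI impI ballI)
    fix v assume "v \<in> V'"
    then show "bracket_map V' f g B v \<in> players V' E'"
      using B_player B_in players_iff g_into by (simp add: bracket_map_def)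
  next
    fix a assume a: "a \<in> players V' E'"
    then have "a \<in> V'" by (simp add: players_def)
    with a show "bracket_map V' f g B a = a"
      using B players_iff[of "g a"] g_into f_g unfolding brackets_def bracket_map_def by auto
  next
    fix x assume x: "x \<in> matches V' E'"
    then have xV: "x \<in> V'" by (simp add: matches_def)
    with x have "g x \<in> matches V E"
      using matches_iff[of "g x"] g_into f_g by auto
    then obtain u where u: "u \<in> in_nbrs E (g x)" "B (g x) = B u"
      using B_match by blast
    then have "u \<in> V" using edges_subset by (auto simp: in_nbrs_def)
    with u xV show "bracket_map V' f g B x \<in> bracket_map V' f g B ` in_nbrs E' x"
      using in_nbrs_f[of "g x"] g_into f_g g_f f_into
      by (auto simp: bracket_map_def intro!: image_eqI[of _ _ "f u"])
  qed (simp add: bracket_map_def)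
qed

lemma bracket_map_inverse:
  assumes "B \<in> brackets V E"
  shows "bracket_map V g f (bracket_map V' f g B) = B"
proof
  fix v show "bracket_map V g f (bracket_map V' f g B) v = B v"
    using assms f_into g_f unfolding brackets_def players_def bracket_map_def by auto
qed

lemma inj_on_bracket_map: "inj_on (bracket_map V' f g) (brackets V E)"
  by (rule inj_on_inverseI[of _ "bracket_map V g f"]) (rule bracket_map_inverse)

lemma score_bracket_map:
  assumes X: "X \<in> brackets V E" and Y: "Y \<in> brackets V E"
  shows "score V' E' (\<lambda>x. \<sigma> (g x)) (bracket_map V' f g X) (bracket_map V' f g Y) = score V E \<sigma> X Y"
proof -
  have in_V: "X v \<in> V" "Y v \<in> V" if "v \<in> V" for v
    using X Y that unfolding brackets_def players_def by auto
  have agree: "{x \<in> matches V' E'. bracket_map V' f g X x = bracket_map V' f g Y x}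
      = f ` {x \<in> matches V E. X x = Y x}"
  proof (intro set_eqI iffI)
    fix x assume x: "x \<in> {x \<in> matches V' E'. bracket_map V' f g X x = bracket_map V' f g Y x}"
    then have "x \<in> V'" by (simp add: matches_def)
    with x show "x \<in> f ` {x \<in> matches V E. X x = Y x}"
      using matches_iff[of "g x"] inj_onD[OF inj_on_f] in_V g_into f_g
      by (auto simp: bracket_map_def intro!: image_eqI[of _ _ "g x"])
  qed (use matches_iff f_into g_f in \<open>auto simp: bracket_map_def matches_def\<close>)
  have "inj_on f {x \<in> matches V E. X x = Y x}"
    by (rule inj_on_subset[OF inj_on_f]) (auto simp: matches_def)
  then show ?thesis
    unfolding score_def agree by (simp add: sum.reindex g_f matches_def)
qed

lemma resolving_bracket_map:
  assumes S: "resolving V E \<sigma> S"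
  shows "resolving V' E' (\<lambda>x. \<sigma> (g x)) (bracket_map V' f g ` S)"
  unfolding resolving_def
proof (intro conjI ballI impI)
  interpret inv: tournament_iso V' E' V E g f
    by (rule inverse)
  have S_brackets: "S \<subseteq> brackets V E"
    using S unfolding resolving_def by blast
  then show "bracket_map V' f g ` S \<subseteq> brackets V' E'"
    using bracket_map_bracket by blast
  fix B' C'
  assume "B' \<in> brackets V' E'" "C' \<in> brackets V' E'" "B' \<noteq> C'"
  let ?B = "bracket_map V g f B'"
  let ?C = "bracket_map V g f C'"
  have restored: "?B \<in> brackets V E" "?C \<in> brackets V E"
      "bracket_map V' f g ?B = B'" "bracket_map V' f g ?C = C'"
    using \<open>B' \<in> brackets V' E'\<close> \<open>C' \<in> brackets V' E'\<close>
    by (simp_all add: inv.bracket_map_bracket inv.bracket_map_inverse)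
  have "?B \<noteq> ?C"
  proof
    assume "?B = ?C"
    then have "bracket_map V' f g ?B = bracket_map V' f g ?C"
      by simp
    with restored(3,4) \<open>B' \<noteq> C'\<close> show False
      by simp
  qed
  with restored(1,2) S obtain X where "X \<in> S" and X: "score V E \<sigma> X ?B \<noteq> score V E \<sigma> X ?C"
    unfolding resolving_def by blast
  then have "X \<in> brackets V E"
    using S_brackets by blast
  from score_bracket_map[OF this restored(1)] score_bracket_map[OF this restored(2)] X
  have "score V' E' (\<lambda>x. \<sigma> (g x)) (bracket_map V' f g X) B'
      \<noteq> score V' E' (\<lambda>x. \<sigma> (g x)) (bracket_map V' f g X) C'"
    unfolding restored(3,4) by simp
  with \<open>X \<in> S\<close> show "\<exists>X'\<in>bracket_map V' f g ` S.
      score V' E' (\<lambda>x. \<sigma> (g x)) X' B' \<noteq> score V' E' (\<lambda>x. \<sigma> (g x)) X' C'"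
    by blast
qed

lemma card_bracket_map: "S \<subseteq> brackets V E \<Longrightarrow> card (bracket_map V' f g ` S) = card S"
  using inj_on_bracket_map by (intro card_image) (rule inj_on_subset)

lemma resolving_bracket_map_inverse:
  assumes "resolving V' E' (\<lambda>x. \<sigma> (g x)) S'"
  shows "resolving V E \<sigma> (bracket_map V g f ` S')"
proof -
  interpret inv: tournament_iso V' E' V E g f
    by (rule inverse)
  have "resolving V E (\<lambda>x. \<sigma> (g (f x))) (bracket_map V g f ` S')"
    using assms by (rule inv.resolving_bracket_map)
  moreover have "resolving V E (\<lambda>x. \<sigma> (g (f x))) S'' \<longleftrightarrow> resolving V E \<sigma> S''" for S''
    by (rule resolving_cong) (simp add: g_f matches_def)
  ultimately show ?thesis
    by blast
qed

end

section \<open>Brackets of the complete binary tree\<close>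

definition cbt_E :: "nat \<Rightarrow> (bool list \<times> bool list) set" where
  "cbt_E K = cbt_edges \<inter> cbt_nodes K \<times> cbt_nodes K"

lemma in_cbt_E: "(u, v) \<in> cbt_E K \<longleftrightarrow> length v < K \<and> (u = v @ [False] \<or> u = v @ [True])"
proof -
  have "(u, v) \<in> cbt_E K \<longleftrightarrow> length v < K \<and> (\<exists>b. u = v @ [b])"
    unfolding cbt_E_def cbt_edges_def cbt_nodes_def by auto
  also have "(\<exists>b. u = v @ [b]) \<longleftrightarrow> u = v @ [False] \<or> u = v @ [True]"
    by (metis (full_types))
  finally show ?thesis .
qed

lemma in_nbrs_cbt_E: "in_nbrs (cbt_E K) v = (if length v < K then {v @ [False], v @ [True]} else {})"
  unfolding in_nbrs_def in_cbt_E by auto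

lemma players_cbt: "players (cbt_nodes K) (cbt_E K) = {v. length v = K}"
  unfolding players_def in_nbrs_cbt_E cbt_nodes_def by auto

lemma card_players_cbt: "card (players (cbt_nodes K) (cbt_E K)) = 2 ^ K"
  unfolding players_cbt using card_lists_length_eq[of "UNIV :: bool set" K] by simp

lemma matches_cbt: "matches (cbt_nodes K) (cbt_E K) = {v. length v < K}"
  unfolding matches_def players_cbt by (auto simp: cbt_nodes_def)

lemma finite_matches_cbt: "finite (matches (cbt_nodes K) (cbt_E K))"
proof -
  have "finite {v :: bool list. length v \<le> K}"
    using finite_lists_length_le[of "UNIV :: bool set" K] by simp
  then show ?thesis
    unfolding matches_cbt by (rule finite_subset[rotated]) auto
qed

lemma standard_tournament_iso:
  assumes "standard_tournament V E"
  obtains k f g where "tournament_iso V E (cbt_nodes k) (cbt_E k) f g"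
proof -
  obtain k f where E: "E \<subseteq> V \<times> V" and f: "bij_betw f V (cbt_nodes k)"
    and iso: "\<forall>u\<in>V. \<forall>v\<in>V. (u, v) \<in> E \<longleftrightarrow> (f u, f v) \<in> cbt_edges"
    using assms unfolding standard_tournament_def by blast
  have "tournament_iso V E (cbt_nodes k) (cbt_E k) f (inv_into V f)"
  proof
    show "(u, v) \<in> E \<longleftrightarrow> (f u, f v) \<in> cbt_E k" if "u \<in> V" "v \<in> V" for u v
      using iso that bij_betwE[OF f] unfolding cbt_E_def by blast
  qed (use E f in \<open>auto simp: cbt_E_def bij_betw_def f_inv_into_f inv_into_into\<close>)
  then show thesis ..
qed

lemma prefix_length_eq: "prefix xs ys \<Longrightarrow> length xs = length ys \<Longrightarrow> xs = ys"
  by (auto simp: prefix_def)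

lemma prefix_snoc_drop_eq: "prefix (xs @ [a]) ys \<Longrightarrow> ys = xs @ a # drop (Suc (length xs)) ys"
  by (auto simp: prefix_def)

abbreviation cbt_bracket :: "nat \<Rightarrow> (bool list \<Rightarrow> bool list) \<Rightarrow> bool" where
  "cbt_bracket K B \<equiv> B \<in> brackets (cbt_nodes K) (cbt_E K)"

lemma cbt_bracket_iff:
  "cbt_bracket K B \<longleftrightarrow>
     (\<forall>v. K < length v \<longrightarrow> B v = undefined) \<and>
     (\<forall>v. length v \<le> K \<longrightarrow> length (B v) = K) \<and>
     (\<forall>v. length v = K \<longrightarrow> B v = v) \<and>
     (\<forall>v. length v < K \<longrightarrow> B v = B (v @ [False]) \<or> B v = B (v @ [True]))"
proof -
  have "(\<forall>v\<in>matches (cbt_nodes K) (cbt_E K). B v \<in> B ` in_nbrs (cbt_E K) v) \<longleftrightarrow>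
      (\<forall>v. length v < K \<longrightarrow> B v = B (v @ [False]) \<or> B v = B (v @ [True]))"
    unfolding matches_cbt in_nbrs_cbt_E by auto
  moreover have "(\<forall>v\<in>cbt_nodes K. B v \<in> players (cbt_nodes K) (cbt_E K)) \<longleftrightarrow>
      (\<forall>v. length v \<le> K \<longrightarrow> length (B v) = K)"
    unfolding players_cbt by (auto simp: cbt_nodes_def)
  ultimately show ?thesis
    unfolding brackets_def players_cbt by (auto simp: cbt_nodes_def not_le)
qed

context
  fixes K B assumes B: "cbt_bracket K B"
begin

lemma cbt_bracket_undefined: "K < length v \<Longrightarrow> B v = undefined"
  using B unfolding cbt_bracket_iff by blast

lemma cbt_bracket_length: "length v \<le> K \<Longrightarrow> length (B v) = K"
  using B unfolding cbt_bracket_iff by blast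

lemma cbt_bracket_leaf: "length v = K \<Longrightarrow> B v = v"
  using B unfolding cbt_bracket_iff by blast

lemma cbt_bracket_match: "length v < K \<Longrightarrow> B v = B (v @ [False]) \<or> B v = B (v @ [True])"
  using B unfolding cbt_bracket_iff by blast

lemma cbt_bracket_prefix: "length v \<le> K \<Longrightarrow> prefix v (B v)"
proof (induction "K - length v" arbitrary: v)
  case 0
  then show ?case by (simp add: cbt_bracket_leaf)
next
  case (Suc d)
  then have "length v < K" and "prefix (v @ [b]) (B (v @ [b]))" for b
    by simp_all
  then show ?case
    using cbt_bracket_match[of v] by (metis append_prefixD)
qed

lemma cbt_bracket_on_path:
  assumes "prefix v v'" and "length v' \<le> K" and "prefix v' (B v)"
  shows "B v' = B v"
  using assms
proof (induction v' rule: rev_induct)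
  case Nil
  then show ?case by simp
next
  case (snoc b u)
  show ?case
  proof (cases "u @ [b] = v")
    case False
    with snoc.prems have "prefix v u"
      by (simp add: prefix_snoc)
    with snoc have IH: "B u = B v"
      by (simp add: append_prefixD)
    have "prefix (u @ [\<not> b]) (B (u @ [\<not> b]))"
      using snoc.prems by (simp add: cbt_bracket_prefix)
    then have "B u \<noteq> B (u @ [\<not> b])"
      using IH snoc.prems(3) by (auto simp: prefix_def)
    with IH show ?thesis
      using cbt_bracket_match[of u] snoc.prems by (cases b) auto
  qed simp
qed

lemma cbt_bracket_prefix_child: "length v < K \<Longrightarrow> prefix (v @ [False]) (B v) \<or> prefix (v @ [True]) (B v)"
  using cbt_bracket_match[of v] cbt_bracket_prefix[of "v @ [_]"] by force

end

definition leftmost_bracket :: "nat \<Rightarrow> bool list \<Rightarrow> bool list" where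
  "leftmost_bracket K v = (if length v \<le> K then v @ replicate (K - length v) False else undefined)"

lemma leftmost_bracket_snoc_False:
  "length v < K \<Longrightarrow> leftmost_bracket K (v @ [False]) = leftmost_bracket K v"
  unfolding leftmost_bracket_def by (simp flip: replicate_Suc add: Suc_diff_Suc)

lemma cbt_bracket_leftmost: "cbt_bracket K (leftmost_bracket K)"
  unfolding cbt_bracket_iff using leftmost_bracket_snoc_False
  by (auto simp: leftmost_bracket_def)

definition promote :: "nat \<Rightarrow> (bool list \<Rightarrow> bool list) \<Rightarrow> bool list \<Rightarrow> bool list \<Rightarrow> bool list" where
  "promote K G c v = (if length v \<le> K \<and> prefix v c then c else G v)"

lemma cbt_bracket_promote:
  assumes G: "cbt_bracket K G" and c: "length c = K"
  shows "cbt_bracket K (promote K G c)"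
  unfolding cbt_bracket_iff
proof (intro conjI allI impI)
  fix v :: "bool list"
  assume v: "length v < K"
  show "promote K G c v = promote K G c (v @ [False]) \<or> promote K G c v = promote K G c (v @ [True])"
  proof (cases "prefix v c")
    case True
    with v c have "prefix (v @ [c ! length v]) c"
      by (simp add: append_one_prefix)
    with v True show ?thesis
      by (cases "c ! length v") (auto simp: promote_def)
  next
    case False
    then have "\<not> prefix (v @ [b]) c" for b
      using append_prefixD by blast
    with False v show ?thesis
      using cbt_bracket_match[OF G v] by (simp add: promote_def)
  qed
qed (use G c cbt_bracket_undefined cbt_bracket_length cbt_bracket_leaf prefix_length_le in
      \<open>auto simp: promote_def prefix_order.eq_iff intro: prefix_length_prefix\<close>)

section \<open>Lower bound\<close>

definition leaves_below :: "nat \<Rightarrow> bool list \<Rightarrow> bool list set" where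
  "leaves_below K u = {c. length c = K \<and> prefix u c}"

lemma card_leaves_below:
  assumes "length u \<le> K"
  shows "card (leaves_below K u) = 2 ^ (K - length u)"
proof -
  have "leaves_below K u = (\<lambda>w. u @ w) ` {w. length w = K - length u}"
    using assms by (auto simp: leaves_below_def prefix_def)
  moreover have "card {w :: bool list. length w = K - length u} = 2 ^ (K - length u)"
    using card_lists_length_eq[of "UNIV :: bool set"] by simp
  ultimately show ?thesis
    by (simp add: card_image inj_on_def)
qed

lemma cbt_brackets_differing_at_root:
  assumes l: "l \<in> leaves_below K [False]" and r: "r \<in> leaves_below K [True]"
  obtains B C where "cbt_bracket K B" "cbt_bracket K C" "B [] = l" "C [] = r"
    and "\<forall>x. x \<noteq> [] \<longrightarrow> B x = C x"
proof
  let ?B = "promote K (promote K (leftmost_bracket K) r) l"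
  let ?C = "promote K (promote K (leftmost_bracket K) l) r"
  have "length l = K" "length r = K"
    using l r by (auto simp: leaves_below_def)
  then show "cbt_bracket K ?B" "cbt_bracket K ?C"
    by (simp_all add: cbt_bracket_promote cbt_bracket_leftmost)
  show "?B [] = l" "?C [] = r"
    by (simp_all add: promote_def)
  have "\<not> (prefix x l \<and> prefix x r)" if "x \<noteq> []" for x
    using l r that by (cases x) (auto simp: leaves_below_def prefix_def)
  then show "\<forall>x. x \<noteq> [] \<longrightarrow> ?B x = ?C x"
    by (auto simp: promote_def)
qed

theorem resolving_cbt_card_ge:
  assumes K: "1 \<le> K" and S: "resolving (cbt_nodes K) (cbt_E K) \<sigma> S" "finite S"
  shows "2 ^ (K - 1) \<le> card S"
proof -
  define champions where "champions = (\<lambda>X. X []) ` S"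
  have cover: "l \<in> champions \<or> r \<in> champions"
    if lr: "l \<in> leaves_below K [False]" "r \<in> leaves_below K [True]" for l r
  proof -
    obtain B C where BC: "cbt_bracket K B" "cbt_bracket K C" and "B [] = l" "C [] = r"
      and agree: "\<forall>x. x \<noteq> [] \<longrightarrow> B x = C x"
      using cbt_brackets_differing_at_root[OF lr] by blast
    have "l \<noteq> r"
      using lr by (auto simp: leaves_below_def prefix_def)
    with \<open>B [] = l\<close> \<open>C [] = r\<close> have "B \<noteq> C"
      by auto
    with BC S(1) obtain X where "X \<in> S"
      and "score (cbt_nodes K) (cbt_E K) \<sigma> X B \<noteq> score (cbt_nodes K) (cbt_E K) \<sigma> X C"
      unfolding resolving_def by blast
    from score_neq_imp_agree_at[OF this(2) agree] \<open>B [] = l\<close> \<open>C [] = r\<close>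
    have "X [] = l \<or> X [] = r"
      by simp
    with \<open>X \<in> S\<close> show ?thesis
      unfolding champions_def by auto
  qed
  have "leaves_below K [False] \<subseteq> champions \<or> leaves_below K [True] \<subseteq> champions"
    using cover by blast
  then obtain b where "leaves_below K [b] \<subseteq> champions"
    by (elim disjE) (erule that)+
  have "2 ^ (K - 1) = card (leaves_below K [b])"
    using K by (simp add: card_leaves_below)
  also have "\<dots> \<le> card champions"
    using S(2) \<open>leaves_below K [b] \<subseteq> champions\<close> by (intro card_mono) (auto simp: champions_def)
  also have "\<dots> \<le> card S"
    unfolding champions_def using S(2) by (rule card_image_le)
  finally show ?thesis .
qed

section \<open>Upper bound\<close>

abbreviation spine :: "nat \<Rightarrow> bool list" where
  "spine i \<equiv> replicate i True"

fun spine_depth :: "bool list \<Rightarrow> nat" where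
  "spine_depth [] = 0"
| "spine_depth (b # v) = (if b then Suc (spine_depth v) else 0)"

lemma spine_depth_cases: "v = spine (spine_depth v) \<or> prefix (spine (spine_depth v) @ [False]) v"
  by (induction v) auto

lemma spine_depth_le: "spine_depth v \<le> length v"
  by (induction v) auto

lemma spine_depth_spine_append: "spine_depth (spine i @ v) = i + spine_depth v"
  by (induction i) auto

lemma spine_depth_spine_False [simp]: "spine_depth (spine i @ False # v) = i"
  and spine_depth_spine [simp]: "spine_depth (spine i) = i"
  using spine_depth_spine_append[of i "False # v"] spine_depth_spine_append[of i "[]"] by simp_all

lemma spine_depth_snoc: "\<not> (v = spine (length v) \<and> b) \<Longrightarrow> spine_depth (v @ [b]) = spine_depth v"
  by (induction v) auto

lemma prefix_spine_imp_le_spine_depth: "prefix (spine j) x \<Longrightarrow> j \<le> spine_depth x"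
  by (auto simp: prefix_def spine_depth_spine_append)

text \<open>
  spine_target K w i is the leaf of the hanging subtree at depth i coded by w.  Of all
  these targets, a match v can only lie on the path of the one at depth spine_depth v,
  so spine_bracket only has to test that one.
\<close>

definition spine_target :: "nat \<Rightarrow> bool list \<Rightarrow> nat \<Rightarrow> bool list" where
  "spine_target K w i = spine i @ False # take (K - Suc i) w"

definition spine_bracket :: "nat \<Rightarrow> bool list \<Rightarrow> bool list \<Rightarrow> bool list" where
  "spine_bracket K w v =
     (if length v < K \<and> prefix v (spine_target K w (spine_depth v))
      then spine_target K w (spine_depth v) else leftmost_bracket K v)"

lemma length_spine_target: "length w = K - 1 \<Longrightarrow> i < K \<Longrightarrow> length (spine_target K w i) = K"
  unfolding spine_target_def by simp

lemma spine_bracket_snoc_on_target: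
  assumes w: "length w = K - 1" and v: "length v < K"
    and on_target: "prefix v (spine_target K w (spine_depth v))"
  shows "\<exists>b. spine_bracket K w (v @ [b]) = spine_bracket K w v"
proof -
  let ?t = "spine_target K w (spine_depth v)"
  let ?b = "?t ! length v"
  have t: "length ?t = K"
    using v spine_depth_le[of v] w by (intro length_spine_target) auto
  have vb: "prefix (v @ [?b]) ?t"
    using on_target v t by (simp add: append_one_prefix)
  have "spine_depth (v @ [?b]) = spine_depth v"
  proof (cases "v = spine (length v)")
    case True
    then have "?b = False"
      unfolding spine_target_def by (metis nth_append_length spine_depth_spine)
    then show ?thesis
      by (simp add: spine_depth_snoc)
  qed (simp add: spine_depth_snoc)
  moreover have "leftmost_bracket K (v @ [?b]) = ?t" if "length (v @ [?b]) = K"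
    using vb that t by (simp add: leftmost_bracket_def prefix_length_eq)
  ultimately have "spine_bracket K w (v @ [?b]) = ?t"
    using vb v by (auto simp: spine_bracket_def)
  moreover have "spine_bracket K w v = ?t"
    using on_target v by (simp add: spine_bracket_def)
  ultimately show ?thesis
    by auto
qed

lemma spine_bracket_snoc_off_target:
  assumes "length v < K" and "\<not> prefix v (spine_target K w (spine_depth v))"
  shows "spine_bracket K w (v @ [False]) = spine_bracket K w v"
proof -
  have "v \<noteq> spine (length v)"
    using assms(2) unfolding spine_target_def by (metis prefix_def spine_depth_spine)
  then have "spine_depth (v @ [False]) = spine_depth v"
    by (simp add: spine_depth_snoc)
  with assms(2) have "spine_bracket K w (v @ [False]) = leftmost_bracket K (v @ [False])"
    by (auto simp: spine_bracket_def dest: append_prefixD)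
  with assms show ?thesis
    by (simp add: spine_bracket_def leftmost_bracket_snoc_False)
qed

lemma cbt_bracket_spine_bracket:
  assumes w: "length w = K - 1"
  shows "cbt_bracket K (spine_bracket K w)"
proof -
  have target_length: "length (spine_target K w (spine_depth v)) = K" if "length v < K" for v
    using that spine_depth_le[of v] w by (intro length_spine_target) auto
  have match: "spine_bracket K w v = spine_bracket K w (v @ [False]) \<or>
      spine_bracket K w v = spine_bracket K w (v @ [True])" if v: "length v < K" for v
  proof (cases "prefix v (spine_target K w (spine_depth v))")
    case True
    then obtain b where "spine_bracket K w (v @ [b]) = spine_bracket K w v"
      using spine_bracket_snoc_on_target[OF w v] by blast
    then show ?thesis
      by (cases b) auto
  next
    case False
    then show ?thesis
      using spine_bracket_snoc_off_target[OF v] by simp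
  qed
  show ?thesis
    unfolding cbt_bracket_iff
  proof (intro conjI allI impI)
    fix v :: "bool list"
    assume "length v < K"
    then show "spine_bracket K w v = spine_bracket K w (v @ [False]) \<or>
        spine_bracket K w v = spine_bracket K w (v @ [True])"
      by (rule match)
  qed (auto simp: spine_bracket_def leftmost_bracket_def target_length)
qed

lemma spine_bracket_spine: "j < K \<Longrightarrow> spine_bracket K w (spine j) = spine_target K w j"
  by (simp add: spine_bracket_def spine_target_def)

lemma spine_bracket_root: "length w = K - 1 \<Longrightarrow> 1 \<le> K \<Longrightarrow> spine_bracket K w [] = False # w"
  using spine_bracket_spine[of 0 K w] by (simp add: spine_target_def)

text \<open>
  For a node m just above the leaves of the hanging subtree at depth j, spine_code m j b
  is a word whose target in that subtree is m @ [b]; the targets of the deeper subtrees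
  only depend on letters of drop (Suc j) m and therefore not on b.
\<close>

definition spine_code :: "bool list \<Rightarrow> nat \<Rightarrow> bool \<Rightarrow> bool list" where
  "spine_code m j b = drop (Suc j) m @ b # replicate j False"

context
  fixes K j :: nat and m :: "bool list"
  assumes m: "prefix (spine j @ [False]) m" and length_m: "length m + 1 = K"
begin

lemma length_spine_code: "length (spine_code m j b) = K - 1"
  using m length_m prefix_length_le[OF m] by (simp add: spine_code_def)

lemma spine_target_spine_code: "spine_target K (spine_code m j b) j = m @ [b]"
proof -
  have "K - Suc j = Suc (length (drop (Suc j) m))"
    using length_m prefix_length_le[OF m] by simp
  then show ?thesis
    unfolding spine_target_def spine_code_def by (subst (2) prefix_snoc_drop_eq[OF m]) simp
qed

lemma spine_target_spine_code_deeper: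
  "j < i \<Longrightarrow> spine_target K (spine_code m j b) i = spine_target K (spine_code m j b') i"
  using length_m unfolding spine_target_def spine_code_def by simp

lemma spine_bracket_spine_code_on_chain:
  assumes "prefix (spine j) x" and "prefix x m"
  shows "spine_bracket K (spine_code m j b) x = m @ [b]"
proof -
  obtain r where x: "x = spine j @ r"
    using assms(1) by (auto simp: prefix_def)
  with assms(2) have "prefix r (False # drop (Suc j) m)"
    by (subst (asm) prefix_snoc_drop_eq[OF m]) simp
  with x have "spine_depth x = j"
    by (cases r) auto
  moreover have "length x < K"
    using prefix_length_le[OF assms(2)] length_m by simp
  moreover have "prefix x (m @ [b])"
    using assms(2) by (simp add: prefix_prefix)
  ultimately show ?thesis
    by (simp add: spine_bracket_def spine_target_spine_code)
qed

lemma spine_bracket_spine_code_off_chain: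
  assumes "prefix (spine j) x" and "length x < K" and "\<not> prefix x m"
  shows "spine_bracket K (spine_code m j True) x = spine_bracket K (spine_code m j False) x"
proof (cases "spine_depth x = j")
  case True
  have "\<not> prefix x (m @ [b])" for b
    using assms(2,3) length_m by (auto simp: prefix_snoc)
  with True show ?thesis
    by (simp add: spine_bracket_def spine_target_spine_code)
next
  case False
  with prefix_spine_imp_le_spine_depth[OF assms(1)] have "j < spine_depth x"
    by simp
  then show ?thesis
    unfolding spine_bracket_def using spine_target_spine_code_deeper by metis
qed

end

definition chain_winners ::
    "(bool list \<Rightarrow> bool list) \<Rightarrow> bool list \<Rightarrow> bool list \<Rightarrow> bool \<Rightarrow> bool list set" where
  "chain_winners Y u m b = {x. prefix u x \<and> prefix x m \<and> Y x = m @ [b]}"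

lemma finite_chain_winners: "finite (chain_winners Y u m b)"
proof -
  have "finite {x :: bool list. length x \<le> length m}"
    using finite_lists_length_le[of "UNIV :: bool set"] by simp
  then show ?thesis
    unfolding chain_winners_def by (rule finite_subset[rotated]) (auto dest: prefix_length_le)
qed

context
  fixes K :: nat and m :: "bool list"
  assumes m: "length m + 1 = K"
begin

lemma chain_winners_upward:
  assumes Y: "cbt_bracket K Y" and x: "x \<in> chain_winners Y u m b"
    and "prefix x x'" and "prefix x' m"
  shows "x' \<in> chain_winners Y u m b"
proof -
  have "prefix x' (Y x)"
    using x \<open>prefix x' m\<close> by (auto simp: chain_winners_def prefix_prefix)
  then have "Y x' = Y x"
    using cbt_bracket_on_path[OF Y \<open>prefix x x'\<close>] prefix_length_le[OF \<open>prefix x' m\<close>] m by simp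
  with assms show ?thesis
    unfolding chain_winners_def by (auto intro: prefix_order.trans)
qed

lemma chain_winners_nested:
  assumes "cbt_bracket K Y" "cbt_bracket K Z"
  shows "chain_winners Y u m b \<subseteq> chain_winners Z u m b \<or> chain_winners Z u m b \<subseteq> chain_winners Y u m b"
proof (rule ccontr)
  assume "\<not> ?thesis"
  then obtain y z where y: "y \<in> chain_winners Y u m b" "y \<notin> chain_winners Z u m b"
    and z: "z \<in> chain_winners Z u m b" "z \<notin> chain_winners Y u m b"
    by blast
  then have "prefix y m" "prefix z m"
    by (auto simp: chain_winners_def)
  then consider "prefix y z" | "prefix z y"
    using prefix_same_cases by blast
  then show False
    using chain_winners_upward[OF assms(1) y(1)] chain_winners_upward[OF assms(2) z(1)]
      y z \<open>prefix y m\<close> \<open>prefix z m\<close> by cases blast+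
qed

lemma chain_winners_last:
  assumes Y: "cbt_bracket K Y" and "prefix u m"
  obtains b where "m \<in> chain_winners Y u m b" "chain_winners Y u m (\<not> b) = {}"
proof -
  obtain b where b: "Y m = m @ [b]"
    using cbt_bracket_match[OF Y, of m] cbt_bracket_leaf[OF Y, of "m @ [_]"] m by force
  moreover have "chain_winners Y u m (\<not> b) = {}"
    using chain_winners_upward[OF Y, of _ u "\<not> b" m] b by (auto simp: chain_winners_def)
  ultimately show thesis
    using that \<open>prefix u m\<close> by (simp add: chain_winners_def)
qed

lemma chain_winners_eq_if_balanced:
  fixes \<sigma> :: "bool list \<Rightarrow> real"
  assumes Y: "cbt_bracket K Y" and Z: "cbt_bracket K Z" and "prefix u m"
    and pos: "\<And>x. length x < K \<Longrightarrow> 0 < \<sigma> x"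
    and balanced: "sum \<sigma> (chain_winners Y u m False) - sum \<sigma> (chain_winners Y u m True)
      = sum \<sigma> (chain_winners Z u m False) - sum \<sigma> (chain_winners Z u m True)"
  shows "chain_winners Y u m b = chain_winners Z u m b"
proof -
  have pos_chain: "0 < \<sigma> x" if "x \<in> chain_winners W u m c" for W c x
    using that pos prefix_length_le m by (fastforce simp: chain_winners_def)
  have signed: "sum \<sigma> (chain_winners W u m False) - sum \<sigma> (chain_winners W u m True)
      = (if c then - sum \<sigma> (chain_winners W u m c) else sum \<sigma> (chain_winners W u m c))"
    and positive: "0 < sum \<sigma> (chain_winners W u m c)"
    if "chain_winners W u m (\<not> c) = {}" "m \<in> chain_winners W u m c" for W c
    using that pos_chain finite_chain_winners by (auto intro!: sum_pos2 intro: less_imp_le)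
  obtain c where c: "chain_winners Y u m (\<not> c) = {}" "m \<in> chain_winners Y u m c"
    using chain_winners_last[OF Y \<open>prefix u m\<close>] by blast
  obtain d where d: "chain_winners Z u m (\<not> d) = {}" "m \<in> chain_winners Z u m d"
    using chain_winners_last[OF Z \<open>prefix u m\<close>] by blast
  have "c = d \<and> sum \<sigma> (chain_winners Y u m c) = sum \<sigma> (chain_winners Z u m d)"
    using balanced signed[OF c] signed[OF d] positive[OF c] positive[OF d]
    by (cases c; cases d) auto
  then have "c = d" and sums: "sum \<sigma> (chain_winners Y u m c) = sum \<sigma> (chain_winners Z u m c)"
    by auto
  have "chain_winners Y u m c = chain_winners Z u m c"
    using nested_eq_if_sum_eq[OF finite_chain_winners finite_chain_winners
        chain_winners_nested[OF Y Z] _ sums] pos_chain by blast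
  with c(1) d(1) \<open>c = d\<close> show ?thesis
    by (cases "b = c") auto
qed

end

definition matches_below :: "nat \<Rightarrow> bool list \<Rightarrow> bool list set" where
  "matches_below K u = {x. length x < K \<and> prefix u x}"

lemma finite_matches_below: "finite (matches_below K u)"
  using finite_matches_cbt[of K] unfolding matches_cbt matches_below_def
  by (rule finite_subset[rotated]) auto

lemma matches_below_Nil: "matches_below K [] = matches (cbt_nodes K) (cbt_E K)"
  by (simp add: matches_below_def matches_cbt)

lemma partial_score_matches_below_split:
  assumes "length u < K"
  shows "partial_score \<sigma> (matches_below K u) X Y = (if X u = Y u then \<sigma> u else 0)
    + partial_score \<sigma> (matches_below K (u @ [False])) X Y + partial_score \<sigma> (matches_below K (u @ [True])) X Y"
proof -
  have "prefix (u @ [False]) x \<or> prefix (u @ [True]) x" if "prefix u x" "x \<noteq> u" for x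
  proof -
    have "length u < length x"
      using that prefix_length_le[OF that(1)] prefix_length_eq[OF that(1)] by fastforce
    then show ?thesis
      using append_one_prefix[OF that(1)] by (cases "x ! length u") auto
  qed
  then have "matches_below K u = insert u (matches_below K (u @ [False]) \<union> matches_below K (u @ [True]))"
    using assms by (auto simp: matches_below_def dest: append_prefixD)
  moreover have "u \<notin> matches_below K (u @ [False]) \<union> matches_below K (u @ [True])"
    and "matches_below K (u @ [False]) \<inter> matches_below K (u @ [True]) = {}"
    by (auto simp: matches_below_def prefix_def)
  ultimately show ?thesis
    unfolding partial_score_def by (simp add: finite_matches_below sum.union_disjoint)
qed

lemma partial_score_spine_code_diff:
  assumes m: "prefix (spine j @ [False]) m" and length_m: "length m + 1 = K"
  shows "partial_score \<sigma> (matches_below K (spine j)) (spine_bracket K (spine_code m j False)) Y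
       - partial_score \<sigma> (matches_below K (spine j)) (spine_bracket K (spine_code m j True)) Y
     = sum \<sigma> (chain_winners Y (spine j) m False) - sum \<sigma> (chain_winners Y (spine j) m True)"
proof -
  let ?chain = "{x. prefix (spine j) x \<and> prefix x m}"
  have "?chain \<subseteq> matches_below K (spine j)"
    using length_m by (auto simp: matches_below_def dest: prefix_length_le)
  moreover have "finite ?chain"
    using finite_matches_below calculation by (rule finite_subset[rotated])
  moreover have "partial_score \<sigma> ?chain (spine_bracket K (spine_code m j b)) Y
      = sum \<sigma> (chain_winners Y (spine j) m b)" for b
    using spine_bracket_spine_code_on_chain[OF m length_m] calculation(2)
    by (subst partial_score_const[where p = "m @ [b]"]) (auto simp: chain_winners_def)
  ultimately show ?thesis
    using spine_bracket_spine_code_off_chain[OF m length_m, symmetric]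
    by (subst partial_score_restrict_diff[OF finite_matches_below]) (auto simp: matches_below_def)
qed

locale spine_indistinguishable =
  fixes K :: nat and \<sigma> :: "bool list \<Rightarrow> real" and B C :: "bool list \<Rightarrow> bool list"
  assumes pos: "\<And>x. length x < K \<Longrightarrow> 0 < \<sigma> x"
    and B: "cbt_bracket K B" and C: "cbt_bracket K C"
    and same_score: "\<And>w. length w = K - 1 \<Longrightarrow>
      score (cbt_nodes K) (cbt_E K) \<sigma> (spine_bracket K w) B = score (cbt_nodes K) (cbt_E K) \<sigma> (spine_bracket K w) C"
begin

definition balanced_below :: "nat \<Rightarrow> bool" where
  "balanced_below j \<longleftrightarrow> (\<forall>w. length w = K - 1 \<longrightarrow>
     partial_score \<sigma> (matches_below K (spine j)) (spine_bracket K w) B =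
     partial_score \<sigma> (matches_below K (spine j)) (spine_bracket K w) C)"

lemma balanced_below_0: "balanced_below 0"
  using same_score finite_matches_cbt
  by (simp add: balanced_below_def matches_below_Nil score_eq_partial_score)

lemma agree_on_chain:
  assumes "balanced_below j" and m: "prefix (spine j @ [False]) m" and length_m: "length m + 1 = K"
    and "prefix (spine j) v" "prefix v m"
  shows "B v = m @ [b] \<longleftrightarrow> C v = m @ [b]"
proof -
  have "sum \<sigma> (chain_winners B (spine j) m False) - sum \<sigma> (chain_winners B (spine j) m True)
      = sum \<sigma> (chain_winners C (spine j) m False) - sum \<sigma> (chain_winners C (spine j) m True)"
    using \<open>balanced_below j\<close> length_spine_code[OF m length_m]
    unfolding partial_score_spine_code_diff[OF m length_m, symmetric] balanced_below_def by simp
  then have "chain_winners B (spine j) m b = chain_winners C (spine j) m b"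
    using chain_winners_eq_if_balanced[OF length_m B C _ pos] m by (meson append_prefixD)
  with assms(4,5) show ?thesis
    by (auto simp: chain_winners_def set_eq_iff)
qed

lemma agree_at_last_spine_match:
  assumes j: "Suc j = K" and "balanced_below j"
  shows "B (spine j) = spine j @ [False] \<longleftrightarrow> C (spine j) = spine j @ [False]"
proof -
  have "x = spine j" if "x \<in> matches_below K (spine j)" for x
  proof -
    from that j have "prefix (spine j) x" "length x \<le> j"
      by (auto simp: matches_below_def)
    then show ?thesis
      using prefix_length_le[of "spine j" x] prefix_length_eq[of "spine j" x] by simp
  qed
  then have "matches_below K (spine j) = {spine j}"
    using j by (auto simp: matches_below_def)
  let ?X = "spine_bracket K (replicate (K - 1) False)"
  have "?X (spine j) = spine j @ [False]"
    using j by (auto simp: spine_bracket_spine spine_target_def)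
  moreover have "partial_score \<sigma> {spine j} ?X B = partial_score \<sigma> {spine j} ?X C"
    using \<open>balanced_below j\<close> \<open>matches_below K (spine j) = {spine j}\<close>
    unfolding balanced_below_def by simp
  ultimately have "(if spine j @ [False] = B (spine j) then \<sigma> (spine j) else 0)
      = (if spine j @ [False] = C (spine j) then \<sigma> (spine j) else 0)"
    by (simp add: partial_score_def)
  moreover have "0 < \<sigma> (spine j)"
    using pos j by simp
  ultimately show ?thesis
    by (smt (verit))
qed

lemma agree_on_left_branch:
  assumes j: "j < K" and "balanced_below j" and v: "v \<in> matches_below K (spine j)"
    and p: "p = B v \<or> p = C v" "prefix (spine j @ [False]) p"
  shows "B v = C v"
proof -
  have "length v < K" "prefix (spine j) v" "prefix v p" "length p = K"
    using v p cbt_bracket_prefix[OF B] cbt_bracket_prefix[OF C]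
      cbt_bracket_length[OF B] cbt_bracket_length[OF C]
    by (auto simp: matches_below_def)
  show ?thesis
  proof (cases "Suc j < K")
    case True
    define m where "m = butlast p"
    have p_m: "p = m @ [last p]" and length_m: "length m + 1 = K"
      using \<open>length p = K\<close> j unfolding m_def by (auto intro: append_butlast_last_id[symmetric])
    have "prefix v m" "prefix (spine j @ [False]) m"
      using prefix_length_prefix[OF _ prefixeq_butlast, of _ p] p \<open>prefix v p\<close> \<open>length v < K\<close>
        True length_m unfolding m_def by auto
    then have "B v = m @ [last p] \<longleftrightarrow> C v = m @ [last p]"
      using agree_on_chain[OF \<open>balanced_below j\<close> _ length_m \<open>prefix (spine j) v\<close>] by blast
    with p p_m show ?thesis
      by auto
  next
    case False
    with j have "Suc j = K"
      by simp
    have "length v = j"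
      using prefix_length_le[OF \<open>prefix (spine j) v\<close>] \<open>length v < K\<close> \<open>Suc j = K\<close> by simp
    then have "v = spine j"
      using prefix_length_eq[OF \<open>prefix (spine j) v\<close>] by simp
    moreover have "p = spine j @ [False]"
      using prefix_length_eq[OF p(2)] \<open>length p = K\<close> \<open>Suc j = K\<close> by simp
    ultimately show ?thesis
      using p(1) agree_at_last_spine_match[OF \<open>Suc j = K\<close> \<open>balanced_below j\<close>] by metis
  qed
qed

lemma agree_below_left_child:
  assumes "j < K" and "balanced_below j" and x: "x \<in> matches_below K (spine j @ [False])"
  shows "B x = C x"
proof -
  from x have "length x < K" "prefix (spine j @ [False]) x"
    by (simp_all add: matches_below_def)
  then have "x \<in> matches_below K (spine j)" "prefix (spine j @ [False]) (B x)"
    using cbt_bracket_prefix[OF B, of x] prefix_order.trans append_prefixD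
    by (auto simp: matches_below_def)
  then show ?thesis
    using agree_on_left_branch[OF assms(1,2)] by blast
qed

lemma balanced_below_Suc:
  assumes j: "j < K" and balanced: "balanced_below j"
  shows "balanced_below (Suc j)"
  unfolding balanced_below_def
proof (intro allI impI)
  fix w :: "bool list"
  assume w: "length w = K - 1"
  let ?X = "spine_bracket K w"
  have root: "(if ?X (spine j) = B (spine j) then \<sigma> (spine j) else 0)
      = (if ?X (spine j) = C (spine j) then \<sigma> (spine j) else 0)"
  proof (cases "?X (spine j) = B (spine j) \<or> ?X (spine j) = C (spine j)")
    case True
    moreover have "prefix (spine j @ [False]) (?X (spine j))"
      using j by (simp add: spine_bracket_spine spine_target_def)
    moreover have "spine j \<in> matches_below K (spine j)"
      using j by (simp add: matches_below_def)
    ultimately have "B (spine j) = C (spine j)"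
      using agree_on_left_branch[OF j balanced] by blast
    then show ?thesis
      by simp
  qed auto
  have left: "partial_score \<sigma> (matches_below K (spine j @ [False])) ?X B
      = partial_score \<sigma> (matches_below K (spine j @ [False])) ?X C"
    unfolding partial_score_def using agree_below_left_child[OF j balanced] by (intro sum.cong) auto
  have "partial_score \<sigma> (matches_below K (spine j)) ?X B = partial_score \<sigma> (matches_below K (spine j)) ?X C"
    using balanced w unfolding balanced_below_def by blast
  then show "partial_score \<sigma> (matches_below K (spine (Suc j))) ?X B
      = partial_score \<sigma> (matches_below K (spine (Suc j))) ?X C"
    using root left partial_score_matches_below_split[of "spine j" K \<sigma> ?X] j
    by (simp add: replicate_append_same)
qed

lemma balanced_below: "j < K \<Longrightarrow> balanced_below j"
  by (induction j) (simp_all add: balanced_below_0 balanced_below_Suc)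

lemma agree_on_spine: "j \<le> K \<Longrightarrow> B (spine j) = C (spine j)"
proof (induction "K - j" arbitrary: j)
  case 0
  then show ?case
    by (simp add: cbt_bracket_leaf[OF B] cbt_bracket_leaf[OF C])
next
  case (Suc d)
  then have j: "j < K"
    by simp
  have on_spine: "spine j \<in> matches_below K (spine j)"
    using j by (simp add: matches_below_def)
  show ?case
  proof (cases "prefix (spine j @ [False]) (B (spine j)) \<or> prefix (spine j @ [False]) (C (spine j))")
    case True
    then show ?thesis
      using agree_on_left_branch[OF j balanced_below[OF j] on_spine] by blast
  next
    case False
    have "Y (spine j) = Y (spine (Suc j))"
      if Y: "cbt_bracket K Y" and "\<not> prefix (spine j @ [False]) (Y (spine j))" for Y
    proof -
      have "prefix (spine j @ [True]) (Y (spine j))"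
        using cbt_bracket_prefix_child[OF Y, of "spine j"] that(2) j by simp
      then have "Y (spine j @ [True]) = Y (spine j)"
        using cbt_bracket_on_path[OF Y, of "spine j" "spine j @ [True]"] j by simp
      then show ?thesis
        by (simp add: replicate_append_same)
    qed
    with False have "B (spine j) = B (spine (Suc j))" "C (spine j) = C (spine (Suc j))"
      using B C by blast+
    moreover have "B (spine (Suc j)) = C (spine (Suc j))"
      using Suc.hyps(1)[of "Suc j"] Suc.hyps(2) j by simp
    ultimately show ?thesis
      by simp
  qed
qed

theorem brackets_eq: "B = C"
proof
  fix v :: "bool list"
  consider "K < length v" | "length v = K" | "length v < K"
    by linarith
  then show "B v = C v"
  proof cases
    case 1
    then show ?thesis
      by (simp add: cbt_bracket_undefined[OF B] cbt_bracket_undefined[OF C])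
  next
    case 2
    then show ?thesis
      by (simp add: cbt_bracket_leaf[OF B] cbt_bracket_leaf[OF C])
  next
    case 3
    let ?j = "spine_depth v"
    have "?j < K"
      using 3 spine_depth_le[of v] by simp
    from spine_depth_cases[of v] show ?thesis
    proof
      assume "v = spine ?j"
      then show ?thesis
        using agree_on_spine \<open>?j < K\<close> by (metis less_imp_le)
    next
      assume "prefix (spine ?j @ [False]) v"
      then show ?thesis
        using agree_below_left_child[OF \<open>?j < K\<close> balanced_below[OF \<open>?j < K\<close>]] 3
        by (simp add: matches_below_def)
    qed
  qed
qed

end

theorem resolving_spine_brackets:
  assumes "scoring_system (cbt_nodes K) (cbt_E K) \<sigma>"
  shows "resolving (cbt_nodes K) (cbt_E K) \<sigma> (spine_bracket K ` {w. length w = K - 1})"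
  unfolding resolving_def
proof (intro conjI ballI impI)
  show "spine_bracket K ` {w. length w = K - 1} \<subseteq> brackets (cbt_nodes K) (cbt_E K)"
    using cbt_bracket_spine_bracket by blast
  fix B C
  assume B: "cbt_bracket K B" and C: "cbt_bracket K C" and "B \<noteq> C"
  have pos: "0 < \<sigma> x" if "length x < K" for x
    using assms that by (simp add: scoring_system_def matches_cbt)
  show "\<exists>X\<in>spine_bracket K ` {w. length w = K - 1}.
      score (cbt_nodes K) (cbt_E K) \<sigma> X B \<noteq> score (cbt_nodes K) (cbt_E K) \<sigma> X C"
  proof (rule ccontr)
    assume "\<not> ?thesis"
    then interpret spine_indistinguishable K \<sigma> B C
      using pos B C by unfold_locales auto
    show False
      using brackets_eq \<open>B \<noteq> C\<close> by simp
  qed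
qed

lemma finite_spine_brackets: "finite (spine_bracket K ` {w. length w = K - 1})"
  using finite_lists_length_eq[of "UNIV :: bool set"] by simp

lemma card_spine_brackets:
  assumes "1 \<le> K"
  shows "card (spine_bracket K ` {w. length w = K - 1}) = 2 ^ (K - 1)"
proof -
  have "inj_on (spine_bracket K) {w. length w = K - 1}"
  proof (rule inj_onI)
    fix w w'
    assume w: "w \<in> {w. length w = K - 1}" and w': "w' \<in> {w. length w = K - 1}"
      and same: "spine_bracket K w = spine_bracket K w'"
    have "False # w = spine_bracket K w []"
      using w spine_bracket_root[OF _ assms] by simp
    also have "\<dots> = False # w'"
      using w' spine_bracket_root[OF _ assms] by (simp add: same)
    finally show "w = w'"
      by simp
  qed
  then show ?thesis
    using card_lists_length_eq[of "UNIV :: bool set" "K - 1"] by (simp add: card_image)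
qed

lemma iso_cbt_resolving_card_ge:
  assumes "tournament_iso V E (cbt_nodes K) (cbt_E K) f g" and "1 \<le> K"
    and "finite T" and "resolving V E \<sigma> T"
  shows "2 ^ (K - 1) \<le> card T"
proof -
  interpret tournament_iso V E "cbt_nodes K" "cbt_E K" f g
    by (fact assms(1))
  have "T \<subseteq> brackets V E"
    using assms(4) by (simp add: resolving_def)
  then show ?thesis
    using resolving_cbt_card_ge[OF assms(2) resolving_bracket_map[OF assms(4)]] assms(3)
    by (simp add: card_bracket_map)
qed

lemma iso_cbt_universal_resolving_set:
  assumes "tournament_iso V E (cbt_nodes K) (cbt_E K) f g" and "1 \<le> K"
  shows "\<exists>S. finite S \<and> card S = 2 ^ (K - 1) \<and>
    (\<forall>\<sigma>. scoring_system V E \<sigma> \<longrightarrow> resolving V E \<sigma> S)"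
proof -
  interpret tournament_iso V E "cbt_nodes K" "cbt_E K" f g
    by (fact assms(1))
  interpret inv: tournament_iso "cbt_nodes K" "cbt_E K" V E g f
    by (rule inverse)
  let ?S = "bracket_map V g f ` spine_bracket K ` {w. length w = K - 1}"
  have "spine_bracket K ` {w. length w = K - 1} \<subseteq> brackets (cbt_nodes K) (cbt_E K)"
    using cbt_bracket_spine_bracket by blast
  then have "finite ?S" "card ?S = 2 ^ (K - 1)"
    using finite_spine_brackets card_spine_brackets[OF assms(2)] by (simp_all add: inv.card_bracket_map)
  moreover have "resolving V E \<sigma> ?S" if "scoring_system V E \<sigma>" for \<sigma>
    using that by (intro resolving_bracket_map_inverse resolving_spine_brackets scoring_system_comp)
  ultimately show ?thesis
    by blast
qed

theorem theorem1p5: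
  fixes V :: "'a set" and E :: "('a \<times> 'a) set" and n :: nat
  assumes "standard_tournament V E"
    and "card (players V E) = n"
    and "n \<ge> 2"
    and "\<exists>k. n = 2 ^ k"
  shows "(\<forall>\<sigma>. scoring_system V E \<sigma> \<longrightarrow> tdim V E \<sigma> = n div 2)
       \<and> (\<exists>S. finite S \<and> card S = n div 2 \<and>
              (\<forall>\<sigma>. scoring_system V E \<sigma> \<longrightarrow> resolving V E \<sigma> S))"
proof -
  obtain k f g where iso: "tournament_iso V E (cbt_nodes k) (cbt_E k) f g"
    using assms(1) by (rule standard_tournament_iso)
  have "n = 2 ^ k"
    using assms(2) tournament_iso.card_players[OF iso] card_players_cbt by simp
  with assms(3) have k: "1 \<le> k" and half: "n div 2 = 2 ^ (k - 1)"
    by (cases k; simp)+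
  obtain S where S: "finite S" "card S = 2 ^ (k - 1)"
    and resolving: "\<forall>\<sigma>. scoring_system V E \<sigma> \<longrightarrow> resolving V E \<sigma> S"
    using iso_cbt_universal_resolving_set[OF iso k] by blast
  have "tdim V E \<sigma> = 2 ^ (k - 1)" if "scoring_system V E \<sigma>" for \<sigma>
    using S resolving that iso_cbt_resolving_card_ge[OF iso k] by (intro tdim_eqI) auto
  with S resolving show ?thesis
    unfolding half by blast
qed

end
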